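(* Let $W$ be a holomorphic $d$-web of codimension one on a complex manifold $X$ of dimension $n\ge2$ which is ordinary and calibrated, with $d=c(n,k_0)$, $k_0\ge2$. Let $\sigma_1,\dots,\sigma_N$ be an adapted trivialization of $\mathcal E=R_{k_0-2}$ over an open set, write $\nabla\sigma_a=\sum_b\omega_a^b\sigma_b$ for the tautological connection and $\Omega_a^b=d\omega_a^b+\sum_c\omega_c^b\wedge\omega_a^c$ for its curvature matrix (row index $b$). Then the curvature matrix is concentrated in its last $c(n-1,k_0)=\frac{(n-2+k_0)!}{(n-2)!\,k_0!}$ rows: $\Omega_a^b=0$ for all $a$ and all $b\le N-c(n-1,k_0)$. In particular, for $n=2$ only the last row can be nonzero.
   Context: For integers $n\ge2$, $h\ge0$, put $c(n,h)=\frac{(n-1+h)!}{(n-1)!\,h!}$. Let $X$ be a complex manifold of dimension $n$ and $W$ a holomorphic $d$-web of codimension one on $X$, given by $d$ codimension-one foliations defined by nonvanishing holomorphic $1$-forms $\omega_1,\dots,\omega_d$. An abelian relation is a $d$-tuple $(f_1,\dots,f_d)$ of holomorphic functions with $\sum_if_i\omega_i=0$ and $d(f_i\omega_i)=0$ for every $i$. For $k\ge0$, $R_k$ is the set of $k$-jets at points of $X$ of $d$-tuples of functions satisfying formally the equations of abelian relations up to order $k$ (the zero-order equations $\sum_if_i\omega_i=0$ with their partial derivatives up to order $k$, and the first-order equations $d(f_i\omega_i)=0$ with their partial derivatives up to order $k-1$); there are natural projections $R_k\to R_{k'}$ for $k'\le k$. The web is calibrated: $d=c(n,k_0)$ for an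 integer $k_0\ge2$. It is ordinary (in the sense of Cavalier–Lehmann); the properties used are: for $0\le k\le k_0-2$, $R_k$ is a holomorphic vector bundle of rank $\sum_{h=1}^{k+1}(d-c(n,h))$, and the projection $R_{k_0-1}\to R_{k_0-2}$ is an isomorphism of holomorphic vector bundles. Tautological connection on $\mathcal E=R_{k_0-2}$: in local coordinates $(x_1,\dots,x_n)$, a section $s$ of $\mathcal E$ is written $(s_L)_{|L|\le k_0-2}$, $s_L$ being the component of the jet indexed by the derivation multi-index $L$; let $\hat s=(\hat s_L)_{|L|\le k_0-1}$ be the unique section of $R_{k_0-1}$ projecting onto $s$. Then $(\nabla_{\partial_i}s)_L=\partial_i(s_L)-\hat s_{L+1_i}$ for $|L|\le k_0-2$, where $L+1_i$ is $L$ with its $i$-th entry increased by $1$ (so $\hat s_{L+1_i}=s_{L+1_i}$ when $|L|\le k_0-3$). Filtration: $F_0(\mathcal E)=\mathcal E$ and $F_h(\mathcal E)=\mathrm{Ker}(R_{k_0-2}\to R_{h-1})$ for $1\le h\le k_0-1$, a subbundle of rank $\sum_{k=h+1}^{k_0-1}(d-c(n,k))$. Let $N=\sum_{h=1}^{k_0-1}(d-c(n,h))$ be the rank of $\mathcal E$. A holomorphic trivialization $(\sigma_a)_{1\le a\le N}$ of $\mathcal E$ is adapted if for every $h$ with $1\le h\le k_0-2$ the sections $\sigma_a$ with $\sum_{k=1}^h(d-c(n,k))<a\le\sum_{k=1}^{h+1}(d-c(n,k))$ span a complement of $F_{h+1}(\mathcal E)$ in $F_h(\mathcal E)$. *)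

theory Defs
  imports "HOL-Analysis.Analysis"
begin

text \<open>Local setting: the manifold is an open set X of complex^'n (local coordinates),
  n = CARD('n).  A jet of a d-tuple of
  functions is a family s i L (i < d the function index, L a derivation multi-index),
  s i L standing for the L-th partial derivative of the i-th function; entries outside
  the range (i \<ge> d or |L| > k) are 0.  A 1-form w_i is given by its coefficients
  w i j (coefficient of dx_j).\<close>

definition cnh :: "nat \<Rightarrow> nat \<Rightarrow> nat" where
  "cnh n h = fact (n - 1 + h) div (fact (n - 1) * fact h)"

definition holo :: "(complex^'n) set \<Rightarrow> (complex^'n \<Rightarrow> complex) \<Rightarrow> bool" where
  "holo U f \<longleftrightarrow> (\<forall>x\<in>U. \<exists>D. (f has_derivative D) (at x) \<and> (\<forall>c v. D (c *s v) = c * D v))"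

definition pd :: "'n \<Rightarrow> (complex^'n \<Rightarrow> complex) \<Rightarrow> complex^'n \<Rightarrow> complex" where
  "pd i f x = deriv (\<lambda>t. f (x + t *s axis i 1)) 0"

definition mabs :: "('n::finite \<Rightarrow> nat) \<Rightarrow> nat" where
  "mabs L = sum L UNIV"

definition madd1 :: "('n \<Rightarrow> nat) \<Rightarrow> 'n \<Rightarrow> ('n \<Rightarrow> nat)" where
  "madd1 L i = L(i := Suc (L i))"

definition mdiff :: "('n \<Rightarrow> nat) \<Rightarrow> ('n \<Rightarrow> nat) \<Rightarrow> ('n \<Rightarrow> nat)" where
  "mdiff M P = (\<lambda>j. M j - P j)"

definition mbinom :: "('n::finite \<Rightarrow> nat) \<Rightarrow> ('n \<Rightarrow> nat) \<Rightarrow> complex" where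
  "mbinom M P = of_nat (\<Prod>j\<in>UNIV. M j choose P j)"

primrec pdm_aux :: "nat \<Rightarrow> ('n \<Rightarrow> nat) \<Rightarrow> (complex^'n \<Rightarrow> complex) \<Rightarrow> complex^'n \<Rightarrow> complex" where
  "pdm_aux 0 L f = f"
| "pdm_aux (Suc k) L f =
     (if (\<exists>i. 0 < L i)
      then (let i = (SOME i. 0 < L i) in pd i (pdm_aux k (L(i := L i - 1)) f))
      else f)"

definition pdm :: "('n::finite \<Rightarrow> nat) \<Rightarrow> (complex^'n \<Rightarrow> complex) \<Rightarrow> complex^'n \<Rightarrow> complex" where
  "pdm L f = pdm_aux (mabs L) L f"

type_synonym 'n jet = "nat \<Rightarrow> ('n \<Rightarrow> nat) \<Rightarrow> complex"

text \<open>Integrability (omega wedge d omega = 0) of the 1-form with coefficients v.\<close>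
definition integrable_form :: "('n \<Rightarrow> complex^'n \<Rightarrow> complex) \<Rightarrow> complex^'n \<Rightarrow> bool" where
  "integrable_form v x \<longleftrightarrow> (\<forall>j l m.
      v j x * (pd l (v m) x - pd m (v l) x) + v l x * (pd m (v j) x - pd j (v m) x)
      + v m x * (pd j (v l) x - pd l (v j) x) = 0)"

text \<open>Zero-order equation sum_i f_i w_i = 0 (coefficient of dx_j), differentiated by M (Leibniz).\<close>
definition zeroeq :: "(nat \<Rightarrow> 'n::finite \<Rightarrow> complex^'n \<Rightarrow> complex) \<Rightarrow> nat \<Rightarrow> complex^'n
    \<Rightarrow> 'n jet \<Rightarrow> ('n \<Rightarrow> nat) \<Rightarrow> 'n \<Rightarrow> bool" where
  "zeroeq w d x s M j \<longleftrightarrow>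
     (\<Sum>i<d. \<Sum>P\<in>{P. P \<le> M}. mbinom M P * s i P * pdm (mdiff M P) (w i j) x) = 0"

text \<open>First-order equation d(f_i w_i) = 0 (coefficient of dx_j wedge dx_l), differentiated by M.\<close>
definition firsteq :: "(nat \<Rightarrow> 'n::finite \<Rightarrow> complex^'n \<Rightarrow> complex) \<Rightarrow> complex^'n
    \<Rightarrow> 'n jet \<Rightarrow> nat \<Rightarrow> ('n \<Rightarrow> nat) \<Rightarrow> 'n \<Rightarrow> 'n \<Rightarrow> bool" where
  "firsteq w x s i M j l \<longleftrightarrow>
     (\<Sum>P\<in>{P. P \<le> M}. mbinom M P *
        (s i (madd1 P j) * pdm (mdiff M P) (w i l) x
         + s i P * pdm (madd1 (mdiff M P) j) (w i l) x
         - s i (madd1 P l) * pdm (mdiff M P) (w i j) x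
         - s i P * pdm (madd1 (mdiff M P) l) (w i j) x)) = 0"

definition Rk :: "(nat \<Rightarrow> 'n::finite \<Rightarrow> complex^'n \<Rightarrow> complex) \<Rightarrow> nat \<Rightarrow> nat \<Rightarrow> complex^'n
    \<Rightarrow> 'n jet set" where
  "Rk w d k x = {s. (\<forall>i L. (d \<le> i \<or> k < mabs L) \<longrightarrow> s i L = 0)
       \<and> (\<forall>M j. mabs M \<le> k \<longrightarrow> zeroeq w d x s M j)
       \<and> (\<forall>i M j l. i < d \<and> Suc (mabs M) \<le> k \<longrightarrow> firsteq w x s i M j l)}"

definition trunc :: "nat \<Rightarrow> ('n::finite) jet \<Rightarrow> 'n jet" where
  "trunc k s = (\<lambda>i L. if mabs L \<le> k then s i L else 0)"

definition lincomb :: "nat set \<Rightarrow> (nat \<Rightarrow> complex) \<Rightarrow> (nat \<Rightarrow> 'n jet) \<Rightarrow> 'n jet" where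
  "lincomb A c v = (\<lambda>i L. \<Sum>a\<in>A. c a * v a i L)"

definition is_basis :: "'n jet set \<Rightarrow> nat \<Rightarrow> (nat \<Rightarrow> 'n jet) \<Rightarrow> bool" where
  "is_basis S r v \<longleftrightarrow> (\<forall>s. s \<in> S \<longleftrightarrow> (\<exists>c. s = lincomb {..<r} c v))
       \<and> (\<forall>c. lincomb {..<r} c v = (\<lambda>i L. 0) \<longrightarrow> (\<forall>a<r. c a = 0))"

definition holo_sec :: "(complex^'n) set \<Rightarrow> (complex^'n \<Rightarrow> 'n jet) \<Rightarrow> bool" where
  "holo_sec U \<sigma> \<longleftrightarrow> (\<forall>i L. holo U (\<lambda>z. \<sigma> z i L))"

text \<open>F is a holomorphic vector (sub)bundle of rank r over X: locally holomorphic frames.\<close>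
definition is_hvb :: "(complex^'n) set \<Rightarrow> (complex^'n \<Rightarrow> 'n jet set) \<Rightarrow> nat \<Rightarrow> bool" where
  "is_hvb X F r \<longleftrightarrow> (\<forall>x\<in>X. \<exists>U. open U \<and> x \<in> U \<and> U \<subseteq> X \<and>
       (\<exists>\<sigma>. (\<forall>a<r. holo_sec U (\<sigma> a)) \<and> (\<forall>y\<in>U. is_basis (F y) r (\<lambda>a. \<sigma> a y))))"

definition is_compl :: "'n jet set \<Rightarrow> 'n jet set \<Rightarrow> nat set \<Rightarrow> (nat \<Rightarrow> 'n jet) \<Rightarrow> bool" where
  "is_compl F G A v \<longleftrightarrow>
     (\<forall>s. s \<in> F \<longleftrightarrow> (\<exists>c t. t \<in> G \<and> s = (\<lambda>i L. lincomb A c v i L + t i L)))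
     \<and> (\<forall>c t. t \<in> G \<and> (\<lambda>i L. lincomb A c v i L + t i L) = (\<lambda>i L. 0) \<longrightarrow> (\<forall>a\<in>A. c a = 0))"

text \<open>Filtration F_h(E) = Ker(R_{k0-2} \<rightarrow> R_{h-1}) for h \<ge> 1.\<close>
definition Ffilt :: "(nat \<Rightarrow> 'n::finite \<Rightarrow> complex^'n \<Rightarrow> complex) \<Rightarrow> nat \<Rightarrow> nat \<Rightarrow> nat
    \<Rightarrow> complex^'n \<Rightarrow> 'n jet set" where
  "Ffilt w d k0 h x = {s \<in> Rk w d (k0 - 2) x. trunc (h - 1) s = (\<lambda>i L. 0)}"

definition lift :: "(nat \<Rightarrow> 'n::finite \<Rightarrow> complex^'n \<Rightarrow> complex) \<Rightarrow> nat \<Rightarrow> nat \<Rightarrow> complex^'n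
    \<Rightarrow> 'n jet \<Rightarrow> 'n jet" where
  "lift w d k0 y s = (THE t. t \<in> Rk w d (k0 - 1) y \<and> trunc (k0 - 2) t = s)"

text \<open>Tautological connection, covariant derivative along the i-th coordinate vector field.\<close>
definition nabla :: "(nat \<Rightarrow> 'n::finite \<Rightarrow> complex^'n \<Rightarrow> complex) \<Rightarrow> nat \<Rightarrow> nat \<Rightarrow> 'n
    \<Rightarrow> (complex^'n \<Rightarrow> 'n jet) \<Rightarrow> complex^'n \<Rightarrow> 'n jet" where
  "nabla w d k0 i \<sigma> y = (\<lambda>i' L. if i' < d \<and> mabs L \<le> k0 - 2
       then pd i (\<lambda>z. \<sigma> z i' L) y - lift w d k0 y (\<sigma> y) i' (madd1 L i) else 0)"

text \<open>Curvature Omega_a^b(d_i, d_j) = (d om_a^b + sum_c om_c^b wedge om_a^c)(d_i, d_j),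
  where om a b i y = om_a^b(d_i) at y.\<close>
definition curv :: "nat \<Rightarrow> (nat \<Rightarrow> nat \<Rightarrow> 'n \<Rightarrow> complex^'n \<Rightarrow> complex) \<Rightarrow> nat \<Rightarrow> nat
    \<Rightarrow> 'n \<Rightarrow> 'n \<Rightarrow> complex^'n \<Rightarrow> complex" where
  "curv N om a b i j y = pd i (om a b j) y - pd j (om a b i) y
      + (\<Sum>c<N. om c b i y * om a c j y - om c b j y * om a c i y)"

end

theory Submission
  imports Defs "HOL-Complex_Analysis.Complex_Analysis" "Jordan_Normal_Form.Determinant"
begin

text \<open>
  Split the adapted frame \<open>\<sigma>\<^sub>1, \<dots>, \<sigma>\<^sub>N\<close> into a head of length \<open>S = N - c(n-1,k\<^sub>0)\<close> and a
  tail: the tail spans the top piece \<open>F\<^bsub>k\<^sub>0-2\<^esub>\<close> of the filtration (jets vanishing below order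
  \<open>k\<^sub>0-2\<close>) and the head is independent modulo it. For \<open>|L| < k\<^sub>0-2\<close> the \<open>L\<close>-component of
  \<open>\<nabla>\<sigma>\<^sub>a\<close> reads \<open>\<partial>\<^sub>k\<sigma>\<^sub>a\<^bsup>L\<^esup> = \<sigma>\<^sub>a\<^bsup>L+1\<^sub>k\<^esup> + \<Sum>\<^sub>b \<omega>\<^sub>a\<^bsup>b\<^esup>(\<partial>\<^sub>k) \<sigma>\<^sub>b\<^bsup>L\<^esup>\<close>, because the lift to
  \<open>R\<^bsub>k\<^sub>0-1\<^esub>\<close> agrees with \<open>\<sigma>\<^sub>a\<close> up to order \<open>k\<^sub>0-2\<close>. Differentiating once more, the
  order-\<open>(k\<^sub>0-1)\<close> terms of the lift and the terms
  \<open>\<omega>\<^sub>a\<^bsup>b\<^esup>(\<partial>\<^sub>i) \<sigma>\<^sub>b\<^bsup>L+1\<^sub>j\<^esup> + \<omega>\<^sub>a\<^bsup>b\<^esup>(\<partial>\<^sub>j) \<sigma>\<^sub>b\<^bsup>L+1\<^sub>i\<^esup>\<close> are symmetric in \<open>i, j\<close>, so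
  \<open>\<partial>\<^sub>i\<partial>\<^sub>j = \<partial>\<^sub>j\<partial>\<^sub>i\<close> leaves \<open>\<Sum>\<^sub>b \<Omega>\<^sub>a\<^bsup>b\<^esup>(\<partial>\<^sub>i,\<partial>\<^sub>j) \<sigma>\<^sub>b\<^bsup>L\<^esup> = 0\<close>. The tail does not contribute
  at these orders, and independence of the head forces \<open>\<Omega>\<^sub>a\<^bsup>b\<^esup> = 0\<close> for the first \<open>S\<close> rows.

  The analytic input is that partial derivatives of holomorphic functions commute (Cauchy
  integrals in two variables) and that the connection forms are differentiable (Cramer's rule).
\<close>

section \<open>Differentiable solutions of linear systems\<close>

lemma field_differentiable_prod:
  fixes f :: "'i \<Rightarrow> complex \<Rightarrow> complex"
  assumes "\<And>i. i \<in> I \<Longrightarrow> f i field_differentiable (at t0)"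
  shows "(\<lambda>t. \<Prod>i\<in>I. f i t) field_differentiable (at t0)"
  using assms
  by (induction I rule: infinite_finite_induct) (auto intro: field_differentiable_mult)

lemma field_differentiable_det:
  fixes e :: "nat \<Rightarrow> nat \<Rightarrow> complex \<Rightarrow> complex"
  assumes "\<And>a b. a < n \<Longrightarrow> b < n \<Longrightarrow> e a b field_differentiable (at t0)"
  shows "(\<lambda>t. Determinant.det (Matrix.mat n n (\<lambda>(a, b). e a b t))) field_differentiable (at t0)"
proof -
  have "Determinant.det (Matrix.mat n n (\<lambda>(a, b). e a b t)) =
      (\<Sum>p | p permutes {0..<n}. signof p * (\<Prod>a = 0..<n. e a (p a) t))" for t
    by (subst det_def'[of _ n]) (auto intro!: sum.cong prod.cong simp: permutes_in_image)
  then show ?thesis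
    using assms
    by (auto intro!: field_differentiable_sum field_differentiable_mult field_differentiable_prod
        simp: permutes_in_image)
qed

lemma gram_det_nonzero:
  fixes A :: "'p \<Rightarrow> nat \<Rightarrow> complex"
  assumes "finite P"
    and indep: "\<And>x. \<forall>p\<in>P. (\<Sum>b<S. x b * A p b) = 0 \<Longrightarrow> \<forall>b<S. x b = 0"
  shows "Determinant.det (Matrix.mat S S (\<lambda>(a, b). \<Sum>p\<in>P. cnj (A p a) * A p b)) \<noteq> 0"
proof
  let ?G = "Matrix.mat S S (\<lambda>(a, b). \<Sum>p\<in>P. cnj (A p a) * A p b)"
  assume "Determinant.det ?G = 0"
  then obtain x where x: "x \<in> carrier_vec S" "x \<noteq> 0\<^sub>v S" "?G *\<^sub>v x = 0\<^sub>v S"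
    using det_0_iff_vec_prod_zero[of ?G S] by auto
  define y where "y p = (\<Sum>b<S. x $ b * A p b)" for p
  have "(\<Sum>b = 0..<S. (\<Sum>p\<in>P. cnj (A p a) * A p b) * x $ b) = 0" if "a < S" for a
    using arg_cong[OF x(3), of "\<lambda>v. vec_index v a"] that x(1) by (simp add: scalar_prod_def)
  then have "0 = (\<Sum>a<S. cnj (x $ a) * (\<Sum>b = 0..<S. (\<Sum>p\<in>P. cnj (A p a) * A p b) * x $ b))"
    by simp
  also have "\<dots> = (\<Sum>p\<in>P. cnj (y p) * y p)"
    unfolding y_def
    by (simp add: sum_distrib_left sum_distrib_right sum.swap[of _ P] lessThan_atLeast0 mult_ac)
  also have "\<dots> = of_real (\<Sum>p\<in>P. (cmod (y p))\<^sup>2)"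
    unfolding of_real_sum by (rule sum.cong[OF refl]) (simp only: complex_norm_square mult.commute)
  finally have "(\<Sum>p\<in>P. (cmod (y p))\<^sup>2) = 0"
    by (metis of_real_eq_0_iff)
  then have "\<forall>p\<in>P. y p = 0"
    using assms(1) by (simp add: sum_nonneg_eq_0_iff)
  then have "\<forall>b<S. x $ b = 0"
    by (intro indep) (simp add: y_def)
  then show False
    using x(1,2) by (auto intro: eq_vecI)
qed

lemma cramer_normal_equations:
  fixes A B :: "'p \<Rightarrow> nat \<Rightarrow> complex" and v :: "'p \<Rightarrow> complex" and c :: "nat \<Rightarrow> complex"
  assumes solves: "\<forall>p\<in>P. (\<Sum>b<S. c b * A p b) = v p" and "b < S"
  shows "c b * Determinant.det (Matrix.mat S S (\<lambda>(a, b). \<Sum>p\<in>P. B p a * A p b))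
    = Determinant.det (Matrix.mat S S (\<lambda>(a, b'). if b' = b then \<Sum>p\<in>P. B p a * v p
        else \<Sum>p\<in>P. B p a * A p b'))"
proof -
  let ?G = "Matrix.mat S S (\<lambda>(a, b). \<Sum>p\<in>P. B p a * A p b)"
  let ?W = "vec S (\<lambda>a. \<Sum>p\<in>P. B p a * v p)"
  have "(\<Sum>b = 0..<S. (\<Sum>p\<in>P. B p a * A p b) * c b) = (\<Sum>p\<in>P. B p a * (\<Sum>b<S. c b * A p b))" for a
    by (simp add: sum_distrib_left sum_distrib_right sum.swap[of _ P] lessThan_atLeast0 mult_ac)
  then have "?G *\<^sub>v vec S c = ?W"
    using solves by (auto intro!: eq_vecI simp: scalar_prod_def)
  then have "c b * Determinant.det ?G = Determinant.det (replace_col ?G ?W b)"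
    using cramer_lemma_mat[of ?G S "vec S c" b] \<open>b < S\<close> by simp
  also have "replace_col ?G ?W b = Matrix.mat S S (\<lambda>(a, b'). if b' = b then \<Sum>p\<in>P. B p a * v p
      else \<Sum>p\<in>P. B p a * A p b')"
    by (auto intro!: eq_matI simp: replace_col_def)
  finally show ?thesis .
qed

text \<open>The solution is recovered by Cramer's rule from the normal equations
  \<open>A(t\<^sub>0)\<^sup>* A(t) c(t) = A(t\<^sub>0)\<^sup>* v(t)\<close>, whose Gram determinant does not vanish at \<open>t\<^sub>0\<close>.\<close>
lemma field_differentiable_linear_solution:
  fixes A :: "'p \<Rightarrow> nat \<Rightarrow> complex \<Rightarrow> complex" and v :: "'p \<Rightarrow> complex \<Rightarrow> complex"
    and c :: "nat \<Rightarrow> complex \<Rightarrow> complex"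
  assumes "finite P"
    and dA: "\<And>p b. p \<in> P \<Longrightarrow> b < S \<Longrightarrow> A p b field_differentiable (at t0)"
    and dv: "\<And>p. p \<in> P \<Longrightarrow> v p field_differentiable (at t0)"
    and solves: "\<forall>\<^sub>F t in nhds t0. \<forall>p\<in>P. (\<Sum>b<S. c b t * A p b t) = v p t"
    and indep: "\<And>x. \<forall>p\<in>P. (\<Sum>b<S. x b * A p b t0) = 0 \<Longrightarrow> \<forall>b<S. x b = 0"
    and "b < S"
  shows "c b field_differentiable (at t0)"
proof -
  define D where "D t = Determinant.det (Matrix.mat S S (\<lambda>(a, b). \<Sum>p\<in>P. cnj (A p a t0) * A p b t))"
    for t
  define Db where "Db t = Determinant.det (Matrix.mat S S (\<lambda>(a, b'). if b' = b
      then \<Sum>p\<in>P. cnj (A p a t0) * v p t else \<Sum>p\<in>P. cnj (A p a t0) * A p b' t))" for t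
  have dG: "(\<lambda>t. \<Sum>p\<in>P. cnj (A p a t0) * A p b' t) field_differentiable (at t0)"
    if "b' < S" for a b'
    using that by (auto intro!: field_differentiable_sum field_differentiable_mult dA)
  have dW: "(\<lambda>t. \<Sum>p\<in>P. cnj (A p a t0) * v p t) field_differentiable (at t0)" for a
    by (auto intro!: field_differentiable_sum field_differentiable_mult dv)
  have dD: "D field_differentiable (at t0)"
    unfolding D_def by (rule field_differentiable_det) (rule dG)
  have "(\<lambda>t. if b' = b then \<Sum>p\<in>P. cnj (A p a t0) * v p t
      else \<Sum>p\<in>P. cnj (A p a t0) * A p b' t) field_differentiable (at t0)" if "b' < S" for a b'
    using that dG dW by (cases "b' = b") simp_all
  then have dDb: "Db field_differentiable (at t0)"
    unfolding Db_def by (rule field_differentiable_det)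
  have "D t0 \<noteq> 0"
    unfolding D_def using gram_det_nonzero[OF assms(1), where S=S and A="\<lambda>p b. A p b t0"] indep
    by blast
  then have "\<forall>\<^sub>F t in nhds t0. D t \<noteq> 0"
    using tendsto_imp_eventually_ne[OF isContD[OF field_differentiable_imp_continuous_at[OF dD]]]
    by (simp add: eventually_nhds_conv_at)
  then have "\<forall>\<^sub>F t in nhds t0. c b t = Db t / D t"
    using solves
    by eventually_elim (simp add: D_def Db_def cramer_normal_equations[OF _ \<open>b < S\<close>, symmetric])
  moreover have "(\<lambda>t. Db t / D t) field_differentiable (at t0)"
    using dDb dD \<open>D t0 \<noteq> 0\<close> by (rule field_differentiable_divide)
  ultimately show ?thesis
    unfolding field_differentiable_def
    using has_field_derivative_cong_ev[of t0 t0 UNIV "c b" "\<lambda>t. Db t / D t"] by simp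
qed

section \<open>Mixed derivatives of separately holomorphic functions\<close>

lemma continuous_on_contour_integral_circlepath:
  fixes H :: "'a::topological_space \<Rightarrow> complex \<Rightarrow> complex"
  assumes "continuous_on (U \<times> path_image (circlepath z r)) (\<lambda>(u, e). H u e)"
  shows "continuous_on U (\<lambda>u. contour_integral (circlepath z r) (H u))"
proof -
  let ?g = "circlepath z r"
  have cont_g: "continuous_on {0..1} ?g"
    using path_circlepath unfolding path_def .
  have pair: "continuous_on (U \<times> cbox 0 1) (\<lambda>x. (fst x, ?g (snd x)))"
    by (intro continuous_intros continuous_on_compose2[OF cont_g]) (auto simp: cbox_interval)
  have "continuous_on (U \<times> cbox 0 1) (\<lambda>x. H (fst x) (?g (snd x)))"
    using continuous_on_compose2[OF assms pair] by (force simp: path_image_def cbox_interval)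
  moreover have "continuous_on (U \<times> cbox 0 1) (\<lambda>x. vector_derivative ?g (at (snd x)))"
    unfolding vector_derivative_circlepath by (intro continuous_intros)
  ultimately have "continuous_on (U \<times> cbox 0 1) (\<lambda>(u, t). H u (?g t) * vector_derivative ?g (at t))"
    by (simp add: split_beta continuous_on_mult)
  from integral_continuous_on_param[OF this] show ?thesis
    by (simp add: contour_integral_integral cbox_interval)
qed

lemma contour_integral_swap_circlepath:
  assumes "continuous_on (path_image (circlepath z r) \<times> path_image (circlepath z r)) (\<lambda>(x, y). f x y)"
  shows "contour_integral (circlepath z r) (\<lambda>x. contour_integral (circlepath z r) (f x)) =
         contour_integral (circlepath z r) (\<lambda>y. contour_integral (circlepath z r) (\<lambda>x. f x y))"
  by (rule contour_integral_swap[OF assms]) (auto simp: vector_derivative_circlepath intro!: continuous_intros)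

locale separately_holomorphic =
  fixes F :: "complex \<Rightarrow> complex \<Rightarrow> complex" and R :: real
  assumes radius_pos: "R > 0"
    and continuous: "continuous_on (cball 0 (2 * R) \<times> cball 0 (2 * R)) (\<lambda>(u, v). F u v)"
    and holomorphic_fst: "\<And>v. v \<in> cball 0 (2 * R) \<Longrightarrow> (\<lambda>u. F u v) holomorphic_on ball 0 (2 * R)"
    and holomorphic_snd: "\<And>u. u \<in> cball 0 (2 * R) \<Longrightarrow> F u holomorphic_on ball 0 (2 * R)"
begin

lemma swap: "separately_holomorphic (\<lambda>u v. F v u) R"
proof
  have "continuous_on (cball 0 (2 * R) \<times> cball 0 (2 * R)) (\<lambda>x. (snd x, fst x))"
    by (intro continuous_intros)
  moreover have "(\<lambda>x. (snd x, fst x)) ` (cball 0 (2 * R) \<times> cball 0 (2 * R))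
      \<subseteq> cball 0 (2 * R) \<times> cball (0::complex) (2 * R)"
    by auto
  ultimately show "continuous_on (cball 0 (2 * R) \<times> cball 0 (2 * R)) (\<lambda>(u, v). F v u)"
    using continuous_on_compose2[OF continuous, of _ "\<lambda>x. (snd x, fst x)"] by (simp add: split_beta)
qed (use radius_pos holomorphic_fst holomorphic_snd in auto)

lemma abs_radius [simp]: "\<bar>R\<bar> = R"
  using radius_pos by simp

lemma cball_subset_bidisc: "cball 0 R \<subseteq> cball (0::complex) (2 * R)"
  using radius_pos by auto

lemma ball_subset_bidisc: "ball 0 R \<subseteq> ball (0::complex) (2 * R)"
  using radius_pos by auto

lemma sphere_subset_bidisc: "sphere 0 R \<subseteq> cball (0::complex) (2 * R)"
  using radius_pos by auto

lemma continuous_on_subset_bidisc: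
  assumes "A \<subseteq> cball 0 (2 * R)" "B \<subseteq> cball 0 (2 * R)"
  shows "continuous_on (A \<times> B) (\<lambda>(u, v). F u v)"
  by (rule continuous_on_subset[OF continuous]) (use assms in auto)

lemma continuous_on_divide_bidisc:
  assumes "A \<subseteq> cball 0 (2 * R)" "B \<subseteq> cball 0 (2 * R)"
    and "continuous_on (A \<times> B) q" "\<And>x. x \<in> A \<times> B \<Longrightarrow> q x \<noteq> 0"
  shows "continuous_on (A \<times> B) (\<lambda>(u, v). F u v / q (u, v))"
proof -
  have "continuous_on (A \<times> B) (\<lambda>x. F (fst x) (snd x))"
    using continuous_on_subset_bidisc[OF assms(1,2)] by (simp add: split_beta)
  from continuous_on_divide[OF this assms(3)] assms(4) show ?thesis
    by (simp add: split_beta)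
qed

lemma continuous_on_fst:
  assumes "v \<in> cball 0 (2 * R)"
  shows "continuous_on (cball 0 R) (\<lambda>u. F u v)"
proof -
  have "continuous_on (cball 0 R) (\<lambda>u. (u, v))"
    by (intro continuous_intros)
  moreover have "(\<lambda>u. (u, v)) ` cball 0 R \<subseteq> cball 0 (2 * R) \<times> cball 0 (2 * R)"
    using assms radius_pos by auto
  ultimately show ?thesis
    using continuous_on_compose2[OF continuous, of _ "\<lambda>u. (u, v)"] by simp
qed

lemma continuous_on_snd:
  assumes "u \<in> cball 0 (2 * R)"
  shows "continuous_on (cball 0 R) (F u)"
  using separately_holomorphic.continuous_on_fst[OF swap assms] .

lemma deriv_snd_eq_contour_integral:
  assumes "u \<in> cball 0 (2 * R)"
  shows "deriv (F u) 0 = contour_integral (circlepath 0 R) (\<lambda>e. F u e / e^2) / (2 * of_real pi * \<i>)"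
proof -
  have "F u holomorphic_on ball 0 R"
    by (rule holomorphic_on_subset[OF holomorphic_snd[OF assms] ball_subset_bidisc])
  moreover have "0 \<in> ball (0::complex) R"
    using radius_pos by simp
  ultimately have "(F u has_field_derivative (1 / (2 * of_real pi * \<i>) *
      contour_integral (circlepath 0 R) (\<lambda>e. F u e / (e - 0)^2))) (at 0)"
    by (rule Cauchy_derivative_integral_circlepath(2)[OF continuous_on_snd[OF assms]])
  then show ?thesis
    using DERIV_imp_deriv by fastforce
qed

lemma continuous_on_deriv_snd: "continuous_on (cball 0 R) (\<lambda>u. deriv (F u) 0)"
proof -
  have "continuous_on (cball 0 R \<times> sphere 0 R) (\<lambda>(u, e). F u e / (snd (u, e))^2)"
    using radius_pos by (intro continuous_on_divide_bidisc continuous_intros) auto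
  then have "continuous_on (cball 0 R)
      (\<lambda>u. contour_integral (circlepath 0 R) (\<lambda>e. F u e / e^2) / (2 * of_real pi * \<i>))"
    by (intro continuous_on_divide continuous_on_const continuous_on_contour_integral_circlepath)
       (simp_all add: path_image_circlepath)
  then show ?thesis
    by (rule continuous_on_eq) (use cball_subset_bidisc in \<open>auto simp: deriv_snd_eq_contour_integral\<close>)
qed

lemma contour_integrable_circlepath_radius:
  "continuous_on (sphere 0 R) h \<Longrightarrow> h contour_integrable_on circlepath 0 R"
  by (rule contour_integrable_continuous_circlepath) (simp add: path_image_circlepath)

lemma continuous_on_snd_sphere: "u \<in> cball 0 (2 * R) \<Longrightarrow> continuous_on (sphere 0 R) (F u)"
  using continuous_on_snd by (rule continuous_on_subset) auto

lemma contour_integrable_snd: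
  assumes "u \<in> cball 0 (2 * R)"
  shows "(\<lambda>e. F u e / e^2) contour_integrable_on circlepath 0 R"
  using continuous_on_snd_sphere[OF assms] radius_pos
  by (intro contour_integrable_circlepath_radius continuous_on_divide) (auto intro!: continuous_intros)

lemma cauchy_integral_fst:
  assumes "v \<in> cball 0 (2 * R)" "u \<in> ball 0 R"
  shows "((\<lambda>z. F z v / (z - u)) has_contour_integral 2 * of_real pi * \<i> * F u v) (circlepath 0 R)"
  using Cauchy_integral_circlepath[OF continuous_on_fst[OF assms(1)]
      holomorphic_on_subset[OF holomorphic_fst[OF assms(1)] ball_subset_bidisc]] assms(2)
  by simp

text \<open>Exchanging the order of the two Cauchy integrals shows that \<open>u \<mapsto> \<partial>\<^sub>vF(u, 0)\<close> satisfies Cauchy's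
  integral formula; this is what makes it holomorphic.\<close>
lemma deriv_snd_cauchy_integral:
  assumes u: "u \<in> ball 0 R"
  shows "((\<lambda>z. deriv (F z) 0 / (z - u)) has_contour_integral
           (2 * of_real pi * \<i> * deriv (F u) 0)) (circlepath 0 R)"
proof -
  let ?g = "circlepath 0 R" and ?c = "2 * of_real pi * \<i> :: complex"
  define f where "f z e = F z e / ((z - u) * e^2)" for z e
  have u_bidisc: "u \<in> cball 0 (2 * R)"
    using u radius_pos by simp
  have cont_f: "continuous_on (sphere 0 R \<times> sphere 0 R) (\<lambda>(z, e). f z e)"
  proof -
    have "continuous_on (sphere 0 R \<times> sphere 0 R)
        (\<lambda>(z, e). F z e / ((\<lambda>x. (fst x - u) * (snd x)^2) (z, e)))"
      using u by (intro continuous_on_divide_bidisc sphere_subset_bidisc continuous_intros) auto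
    then show ?thesis
      by (simp add: f_def)
  qed
  have inner_e: "contour_integral ?g (f z) / ?c = deriv (F z) 0 / (z - u)" if z: "z \<in> sphere 0 R" for z
  proof -
    have "contour_integral ?g (f z) = contour_integral ?g (\<lambda>e. F z e / e^2 / (z - u))"
      unfolding f_def by (simp add: divide_divide_eq_left mult.commute)
    also have "\<dots> = contour_integral ?g (\<lambda>e. F z e / e^2) / (z - u)"
      using z sphere_subset_bidisc by (intro contour_integral_div contour_integrable_snd) auto
    finally have "contour_integral ?g (f z) = contour_integral ?g (\<lambda>e. F z e / e^2) / (z - u)" .
    then show ?thesis
      using z sphere_subset_bidisc by (auto simp: deriv_snd_eq_contour_integral)
  qed
  have inner_z: "contour_integral ?g (\<lambda>z. f z e) = ?c * (F u e / e^2)" if e: "e \<in> sphere 0 R" for e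
    using has_contour_integral_div[OF cauchy_integral_fst[OF _ u], of e "e^2"] e sphere_subset_bidisc
    unfolding f_def by (auto intro: contour_integral_unique simp: field_simps mult.commute)
  have "contour_integral ?g (\<lambda>z. deriv (F z) 0 / (z - u))
      = contour_integral ?g (\<lambda>z. contour_integral ?g (f z) / ?c)"
    by (rule contour_integral_cong) (simp_all add: inner_e path_image_circlepath)
  also have "\<dots> = contour_integral ?g (\<lambda>z. contour_integral ?g (f z)) / ?c"
    using cont_f
    by (intro contour_integral_div contour_integrable_circlepath_radius
        continuous_on_contour_integral_circlepath) (simp add: path_image_circlepath)
  also have "\<dots> = contour_integral ?g (\<lambda>e. contour_integral ?g (\<lambda>z. f z e)) / ?c"
    using cont_f by (simp add: contour_integral_swap_circlepath path_image_circlepath)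
  also have "\<dots> = contour_integral ?g (\<lambda>e. ?c * (F u e / e^2)) / ?c"
    by (intro arg_cong[where f="\<lambda>x. x / _"] contour_integral_cong) (simp_all add: inner_z)
  also have "\<dots> = ?c * deriv (F u) 0"
    using contour_integrable_snd[OF u_bidisc] deriv_snd_eq_contour_integral[OF u_bidisc]
    by (subst contour_integral_lmul) auto
  finally have "contour_integral ?g (\<lambda>z. deriv (F z) 0 / (z - u)) = ?c * deriv (F u) 0" .
  moreover have "(\<lambda>z. deriv (F z) 0 / (z - u)) contour_integrable_on ?g"
    using continuous_on_subset[OF continuous_on_deriv_snd, of "sphere 0 R"] u radius_pos
    by (intro contour_integrable_circlepath_radius continuous_on_divide) (auto intro!: continuous_intros)
  ultimately show ?thesis
    using has_contour_integral_integral by fastforce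
qed

lemma continuous_on_double_kernel:
  "continuous_on (sphere 0 R \<times> sphere 0 R) (\<lambda>(z, e). F z e / (z^2 * e^2))"
proof -
  have "continuous_on (sphere 0 R \<times> sphere 0 R)
      (\<lambda>(z, e). F z e / ((\<lambda>x. (fst x)^2 * (snd x)^2) (z, e)))"
    using radius_pos
    by (intro continuous_on_divide_bidisc sphere_subset_bidisc continuous_intros) auto
  then show ?thesis
    by simp
qed

lemma deriv_snd_div_square:
  assumes "z \<in> cball 0 (2 * R)"
  shows "deriv (F z) 0 / z^2
    = contour_integral (circlepath 0 R) (\<lambda>e. F z e / (z^2 * e^2)) / (2 * of_real pi * \<i>)"
proof -
  have "contour_integral (circlepath 0 R) (\<lambda>e. F z e / (z^2 * e^2))
      = contour_integral (circlepath 0 R) (\<lambda>e. F z e / e^2 / z^2)"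
    by (simp add: divide_divide_eq_left mult.commute)
  also have "\<dots> = contour_integral (circlepath 0 R) (\<lambda>e. F z e / e^2) / z^2"
    by (rule contour_integral_div[OF contour_integrable_snd[OF assms]])
  finally show ?thesis
    by (simp add: deriv_snd_eq_contour_integral[OF assms])
qed

lemma contour_integral_deriv_snd_div_square:
  "contour_integral (circlepath 0 R) (\<lambda>z. deriv (F z) 0 / z^2)
    = contour_integral (circlepath 0 R) (\<lambda>z. contour_integral (circlepath 0 R) (\<lambda>e. F z e / (z^2 * e^2)))
      / (2 * of_real pi * \<i>)"
proof -
  have "contour_integral (circlepath 0 R) (\<lambda>z. deriv (F z) 0 / z^2)
      = contour_integral (circlepath 0 R)
          (\<lambda>z. contour_integral (circlepath 0 R) (\<lambda>e. F z e / (z^2 * e^2)) / (2 * of_real pi * \<i>))"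
    using sphere_subset_bidisc by (intro contour_integral_cong) (auto simp: deriv_snd_div_square)
  also have "\<dots> = contour_integral (circlepath 0 R)
      (\<lambda>z. contour_integral (circlepath 0 R) (\<lambda>e. F z e / (z^2 * e^2))) / (2 * of_real pi * \<i>)"
    using continuous_on_double_kernel
    by (intro contour_integral_div contour_integrable_circlepath_radius
        continuous_on_contour_integral_circlepath) simp
  finally show ?thesis .
qed

lemma has_field_derivative_deriv_snd:
  "((\<lambda>u. deriv (F u) 0) has_field_derivative
     contour_integral (circlepath 0 R) (\<lambda>z. contour_integral (circlepath 0 R) (\<lambda>e. F z e / (z^2 * e^2)))
       / (2 * of_real pi * \<i>)^2) (at 0)"
proof -
  let ?g = "circlepath 0 R" and ?c = "2 * of_real pi * \<i> :: complex"
  have "((\<lambda>w. ?c * deriv (F w) 0) has_field_derivative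
      of_nat 1 * contour_integral ?g (\<lambda>z. deriv (F z) 0 / (z - 0)^Suc 1)) (at 0)"
  proof (rule Cauchy_next_derivative_circlepath(2))
    show "continuous_on (path_image ?g) (\<lambda>z. deriv (F z) 0)"
      using continuous_on_deriv_snd by (rule continuous_on_subset) auto
    show "((\<lambda>z. deriv (F z) 0 / (z - w)^1) has_contour_integral ?c * deriv (F w) 0) ?g"
      if "w \<in> ball 0 R" for w
      using deriv_snd_cauchy_integral[OF that] by simp
  qed (use radius_pos in auto)
  then have "((\<lambda>w. ?c * deriv (F w) 0 / ?c) has_field_derivative
      contour_integral ?g (\<lambda>z. deriv (F z) 0 / z^2) / ?c) (at 0)"
    by (intro DERIV_cdivide) (simp add: power2_eq_square)
  then show ?thesis
    unfolding contour_integral_deriv_snd_div_square by (simp add: power2_eq_square[of ?c])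
qed

lemma mixed_deriv_eq:
  "\<exists>K. ((\<lambda>u. deriv (F u) 0) has_field_derivative K) (at 0)
     \<and> ((\<lambda>v. deriv (\<lambda>u. F u v) 0) has_field_derivative K) (at 0)"
proof -
  interpret swapped: separately_holomorphic "\<lambda>u v. F v u" R
    by (rule swap)
  have "contour_integral (circlepath 0 R) (\<lambda>z. contour_integral (circlepath 0 R) (\<lambda>e. F e z / (z^2 * e^2)))
      = contour_integral (circlepath 0 R) (\<lambda>e. contour_integral (circlepath 0 R) (\<lambda>z. F e z / (z^2 * e^2)))"
    using swapped.continuous_on_double_kernel by (simp add: contour_integral_swap_circlepath)
  also have "\<dots> = contour_integral (circlepath 0 R) (\<lambda>z. contour_integral (circlepath 0 R) (\<lambda>e. F z e / (z^2 * e^2)))"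
    by (simp add: mult.commute)
  finally show ?thesis
    using has_field_derivative_deriv_snd swapped.has_field_derivative_deriv_snd by auto
qed

end

section \<open>Partial derivatives of holomorphic functions on \<open>complex^'n\<close>\<close>

lemma norm_scalar_mult_vec: "norm (c *s x) = cmod c * norm (x :: complex^'n)"
  unfolding norm_vec_def by (simp add: norm_mult L2_set_right_distrib)

lemma bounded_linear_scalar_mult_vec: "bounded_linear (\<lambda>c::complex. c *s (x :: complex^'n))"
proof (rule bounded_linear_intro[where K="norm x"])
  show "(c + d) *s x = c *s x + d *s x" for c d
    by (simp add: vector_sadd_rdistrib)
  show "(r *\<^sub>R c) *s x = r *\<^sub>R (c *s x)" for r c
    by (simp add: Finite_Cartesian_Product.vec_eq_iff)
  show "norm (c *s x) \<le> norm c * norm x" for c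
    by (simp add: norm_scalar_mult_vec)
qed

lemma continuous_on_line: "continuous_on UNIV (\<lambda>t::complex. y + t *s (a :: complex^'n))"
  by (intro continuous_intros bounded_linear.continuous_on[OF bounded_linear_scalar_mult_vec])

lemma eventually_line_in_open:
  fixes a :: "complex^'n"
  assumes "open V" "y \<in> V"
  shows "\<forall>\<^sub>F t in nhds 0. y + t *s a \<in> V"
  using eventually_nhds_in_open[OF open_vimage[OF assms(1) continuous_on_line]] assms(2)
  by simp

lemma holo_imp_continuous_on: "holo V f \<Longrightarrow> continuous_on V f"
  unfolding holo_def by (meson continuous_at_imp_continuous_on has_derivative_continuous)

lemma holo_has_field_derivative_line:
  fixes f :: "complex^'n \<Rightarrow> complex"
  assumes "holo V f" and "p + t0 *s a \<in> V"
  shows "\<exists>D. ((\<lambda>t. f (p + t *s a)) has_field_derivative D) (at t0)"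
proof -
  obtain D where D: "(f has_derivative D) (at (p + t0 *s a))" and lin: "\<forall>c v. D (c *s v) = c * D v"
    using assms unfolding holo_def by blast
  have "((\<lambda>t. p + t *s a) has_derivative (\<lambda>h. 0 + h *s a)) (at t0)"
    by (intro has_derivative_add has_derivative_const
        bounded_linear.has_derivative[OF bounded_linear_scalar_mult_vec has_derivative_ident])
  from has_derivative_compose[OF this D]
  have "((\<lambda>t. f (p + t *s a)) has_derivative (\<lambda>h. D (0 + h *s a))) (at t0)" .
  moreover have "(\<lambda>h. D (0 + h *s a)) = (*) (D a)"
    using lin by (auto simp: mult.commute)
  ultimately show ?thesis
    unfolding has_field_derivative_def by auto
qed

lemma holo_holomorphic_on_line:
  assumes "holo V f" and "\<And>t. t \<in> S \<Longrightarrow> p + t *s a \<in> V"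
  shows "(\<lambda>t. f (p + t *s a)) holomorphic_on S"
  unfolding holomorphic_on_def field_differentiable_def
  using holo_has_field_derivative_line[OF assms(1)] assms(2) has_field_derivative_at_within by blast

lemma plane_bidisc_in_open:
  fixes a b :: "complex^'n"
  assumes "open V" "y \<in> V"
  obtains R where "R > 0" "\<And>u v. cmod u \<le> 2 * R \<Longrightarrow> cmod v \<le> 2 * R \<Longrightarrow> y + u *s a + v *s b \<in> V"
proof -
  obtain e where e: "e > 0" "ball y e \<subseteq> V"
    using assms open_contains_ball by blast
  define M where "M = norm a + norm b + 1"
  have M: "M > 0"
    by (simp add: M_def add_nonneg_pos)
  define R where "R = e / (4 * M)"
  have "y + u *s a + v *s b \<in> V" if "cmod u \<le> 2 * R" "cmod v \<le> 2 * R" for u v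
  proof -
    have "norm (u *s a + v *s b) \<le> cmod u * norm a + cmod v * norm b"
      using norm_triangle_ineq[of "u *s a" "v *s b"] by (simp add: norm_scalar_mult_vec)
    also have "\<dots> \<le> 2 * R * (norm a + norm b)"
      using that by (simp add: distrib_left mult_right_mono add_mono)
    also have "\<dots> \<le> 2 * R * M"
      using e M by (simp add: R_def M_def distrib_left)
    also have "\<dots> < e"
      using e M by (simp add: R_def)
    finally have "dist y (y + u *s a + v *s b) < e"
      by (metis add.assoc add_diff_cancel_left' dist_commute dist_norm)
    then show ?thesis
      using e(2) by auto
  qed
  moreover have "R > 0"
    using e M by (simp add: R_def)
  ultimately show ?thesis
    using that by blast
qed

lemma holo_restrict_plane:
  fixes f :: "complex^'n \<Rightarrow> complex"
  assumes "holo V f" "open V" "y \<in> V"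
  obtains R where "separately_holomorphic (\<lambda>u v. f (y + u *s a + v *s b)) R"
proof -
  obtain R where R: "R > 0"
    and in_V: "\<And>u v. cmod u \<le> 2 * R \<Longrightarrow> cmod v \<le> 2 * R \<Longrightarrow> y + u *s a + v *s b \<in> V"
    using plane_bidisc_in_open[OF assms(2,3)] by blast
  have "separately_holomorphic (\<lambda>u v. f (y + u *s a + v *s b)) R"
  proof
    have "continuous_on (cball 0 (2 * R) \<times> cball 0 (2 * R)) (\<lambda>x. y + fst x *s a + snd x *s b)"
      by (intro continuous_intros bounded_linear.continuous_on[OF bounded_linear_scalar_mult_vec])
    then show "continuous_on (cball 0 (2 * R) \<times> cball 0 (2 * R)) (\<lambda>(u, v). f (y + u *s a + v *s b))"
      using continuous_on_compose2[OF holo_imp_continuous_on[OF assms(1)]] in_V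
      by (force simp: split_beta)
    show "(\<lambda>u. f (y + u *s a + v *s b)) holomorphic_on ball 0 (2 * R)" if "v \<in> cball 0 (2 * R)" for v
    proof -
      have "(\<lambda>u. f ((y + v *s b) + u *s a)) holomorphic_on ball 0 (2 * R)"
        by (rule holo_holomorphic_on_line[OF assms(1)])
           (use in_V that in \<open>force simp: add_ac less_imp_le\<close>)
      then show ?thesis
        by (simp add: add_ac)
    qed
    show "(\<lambda>v. f (y + u *s a + v *s b)) holomorphic_on ball 0 (2 * R)" if "u \<in> cball 0 (2 * R)" for u
      by (rule holo_holomorphic_on_line[OF assms(1)]) (use in_V that in \<open>force simp: less_imp_le\<close>)
  qed (rule R)
  then show ?thesis ..
qed

definition pd_differentiable :: "'n \<Rightarrow> (complex^'n \<Rightarrow> complex) \<Rightarrow> complex^'n \<Rightarrow> bool" where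
  "pd_differentiable i \<phi> y \<longleftrightarrow> (\<lambda>t. \<phi> (y + t *s axis i 1)) field_differentiable (at 0)"

lemma pd_has_field_derivative:
  "pd_differentiable i \<phi> y \<Longrightarrow> ((\<lambda>t. \<phi> (y + t *s axis i 1)) has_field_derivative pd i \<phi> y) (at 0)"
  unfolding pd_differentiable_def pd_def by (rule field_differentiable_derivI)

lemma pd_cong:
  assumes "open V" "y \<in> V" "\<And>z. z \<in> V \<Longrightarrow> \<phi> z = \<psi> z"
  shows "pd i \<phi> y = pd i \<psi> y"
proof -
  have "\<forall>\<^sub>F t in nhds 0. \<phi> (y + t *s axis i 1) = \<psi> (y + t *s axis i 1)"
    using eventually_line_in_open[OF assms(1,2)] by eventually_elim (rule assms(3))
  then show ?thesis
    unfolding pd_def by (rule deriv_cong_ev) (rule refl)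
qed

lemma pd_eq_0:
  assumes "open V" "y \<in> V" "\<And>z. z \<in> V \<Longrightarrow> \<phi> z = 0"
  shows "pd i \<phi> y = 0"
  using pd_cong[OF assms] unfolding pd_def by (simp only: deriv_const)

lemma pd_add:
  assumes "pd_differentiable i \<phi> y" "pd_differentiable i \<psi> y"
  shows "pd i (\<lambda>z. \<phi> z + \<psi> z) y = pd i \<phi> y + pd i \<psi> y"
  using DERIV_add[OF pd_has_field_derivative[OF assms(1)] pd_has_field_derivative[OF assms(2)]]
  unfolding pd_def[of i "\<lambda>z. \<phi> z + \<psi> z"] by (rule DERIV_imp_deriv)

lemma pd_mult:
  assumes "pd_differentiable i \<phi> y" "pd_differentiable i \<psi> y"
  shows "pd i (\<lambda>z. \<phi> z * \<psi> z) y = pd i \<phi> y * \<psi> y + \<phi> y * pd i \<psi> y"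
  using DERIV_mult[OF pd_has_field_derivative[OF assms(1)] pd_has_field_derivative[OF assms(2)]]
  unfolding pd_def[of i "\<lambda>z. \<phi> z * \<psi> z"] by (simp add: DERIV_imp_deriv mult.commute)

lemma pd_sum:
  assumes "\<And>b. b \<in> I \<Longrightarrow> pd_differentiable i (\<phi> b) y"
  shows "pd i (\<lambda>z. \<Sum>b\<in>I. \<phi> b z) y = (\<Sum>b\<in>I. pd i (\<phi> b) y)"
  using DERIV_sum[OF pd_has_field_derivative[OF assms]]
  unfolding pd_def[of i "\<lambda>z. \<Sum>b\<in>I. \<phi> b z"] by (rule DERIV_imp_deriv)

lemma pd_differentiable_mult:
  "pd_differentiable i \<phi> y \<Longrightarrow> pd_differentiable i \<psi> y \<Longrightarrow> pd_differentiable i (\<lambda>z. \<phi> z * \<psi> z) y"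
  unfolding pd_differentiable_def by (rule field_differentiable_mult)

lemma pd_differentiable_diff:
  "pd_differentiable i \<phi> y \<Longrightarrow> pd_differentiable i \<psi> y \<Longrightarrow> pd_differentiable i (\<lambda>z. \<phi> z - \<psi> z) y"
  unfolding pd_differentiable_def by (rule field_differentiable_diff)

lemma pd_differentiable_sum:
  "(\<And>b. b \<in> I \<Longrightarrow> pd_differentiable i (\<phi> b) y) \<Longrightarrow> pd_differentiable i (\<lambda>z. \<Sum>b\<in>I. \<phi> b z) y"
  unfolding pd_differentiable_def by (rule field_differentiable_sum)

lemma holo_pd_differentiable: "holo V f \<Longrightarrow> y \<in> V \<Longrightarrow> pd_differentiable i f y"
  unfolding pd_differentiable_def field_differentiable_def
  using holo_has_field_derivative_line[of V f y 0 "axis i 1"] by simp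

lemma holo_pd_pd:
  assumes "holo V f" "open V" "y \<in> V"
  shows "pd_differentiable i (pd j f) y" and "pd i (pd j f) y = pd j (pd i f) y"
proof -
  obtain R where "separately_holomorphic (\<lambda>u v. f (y + u *s axis i 1 + v *s axis j 1)) R"
    using holo_restrict_plane[OF assms] by blast
  then obtain K
    where "((\<lambda>u. deriv (\<lambda>v. f (y + u *s axis i 1 + v *s axis j 1)) 0) has_field_derivative K) (at 0)"
      and "((\<lambda>v. deriv (\<lambda>u. f (y + u *s axis i 1 + v *s axis j 1)) 0) has_field_derivative K) (at 0)"
    using separately_holomorphic.mixed_deriv_eq by blast
  moreover have "(\<lambda>v. deriv (\<lambda>u. f (y + u *s axis i 1 + v *s axis j 1)) 0) = (\<lambda>v. pd i f (y + v *s axis j 1))"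
    unfolding pd_def by (simp only: add.assoc add.commute[of "_ *s axis i 1"])
  ultimately have K_ij: "((\<lambda>u. pd j f (y + u *s axis i 1)) has_field_derivative K) (at 0)"
    and K_ji: "((\<lambda>v. pd i f (y + v *s axis j 1)) has_field_derivative K) (at 0)"
    unfolding pd_def by (simp_all only: add.assoc)
  show "pd_differentiable i (pd j f) y"
    unfolding pd_differentiable_def field_differentiable_def using K_ij by blast
  show "pd i (pd j f) y = pd j (pd i f) y"
    unfolding pd_def[of i "pd j f"] pd_def[of j "pd i f"]
    using DERIV_imp_deriv[OF K_ij] DERIV_imp_deriv[OF K_ji] by simp
qed

section \<open>Multi-indices and binomial coefficients\<close>

lemma mabs_madd1: "mabs (madd1 L k) = Suc (mabs L)"
proof -
  have "mabs (madd1 L k) = madd1 L k k + sum (madd1 L k) (UNIV - {k})"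
    unfolding mabs_def by (rule sum.remove) auto
  also have "sum (madd1 L k) (UNIV - {k}) = sum L (UNIV - {k})"
    by (rule sum.cong) (auto simp: madd1_def)
  finally show ?thesis
    using sum.remove[of UNIV k L] by (simp add: madd1_def mabs_def)
qed

lemma madd1_commute: "madd1 (madd1 L j) i = madd1 (madd1 L i) j"
  by (auto simp: madd1_def fun_eq_iff)

lemma finite_mabs_le: "finite {L :: 'n::finite \<Rightarrow> nat. mabs L \<le> m}"
proof (rule finite_subset)
  show "{L :: 'n \<Rightarrow> nat. mabs L \<le> m} \<subseteq> PiE UNIV (\<lambda>_. {..m})"
  proof
    fix L :: "'n \<Rightarrow> nat"
    assume "L \<in> {L. mabs L \<le> m}"
    then have "L k \<le> m" for k
      using member_le_sum[of k UNIV L] by (simp add: mabs_def)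
    then show "L \<in> PiE UNIV (\<lambda>_. {..m})"
      by (simp add: PiE_UNIV_domain)
  qed
qed (rule finite_PiE; simp)

lemma cnh_eq_binomial:
  assumes "m \<ge> 1"
  shows "cnh m h = (m - 1 + h) choose h"
proof -
  have "fact h * fact (m - 1 + h - h) * ((m - 1 + h) choose h) = (fact (m - 1 + h) :: nat)"
    by (rule binomial_fact_lemma) simp
  then have "fact (m - 1 + h) = (fact (m - 1) * fact h) * ((m - 1 + h) choose h :: nat)"
    by (simp add: mult_ac)
  then show ?thesis
    unfolding cnh_def by simp
qed

lemma cnh_pascal:
  assumes "n \<ge> 2" "k \<ge> 1"
  shows "cnh n k = cnh n (k - 1) + cnh (n - 1) k"
proof -
  define n' where "n' = n - 2"
  define k' where "k' = k - 1"
  have nk: "n = Suc (Suc n')" "k = Suc k'"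
    using assms unfolding n'_def k'_def by arith+
  have "cnh n k = Suc (Suc n' + k') choose Suc k'"
    unfolding nk by (subst cnh_eq_binomial) simp_all
  also have "\<dots> = ((Suc n' + k') choose k') + ((Suc n' + k') choose Suc k')"
    by (rule binomial_Suc_Suc)
  also have "(Suc n' + k') choose k' = cnh n (k - 1)"
    unfolding nk by (subst cnh_eq_binomial) simp_all
  also have "(Suc n' + k') choose Suc k' = cnh (n - 1) k"
    unfolding nk by (subst cnh_eq_binomial) simp_all
  finally show ?thesis .
qed

section \<open>Frames of the tautological connection\<close>

text \<open>For \<open>k0 = 2\<close>
  the conditions \<open>mabs L < k0 - 2\<close> are void and \<open>S = 0\<close>.\<close>
locale tautological_frame =
  fixes V :: "(complex^'n::finite) set"
    and w :: "nat \<Rightarrow> 'n \<Rightarrow> complex^'n \<Rightarrow> complex"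
    and d k0 N S :: nat
    and \<sigma> :: "nat \<Rightarrow> complex^'n \<Rightarrow> 'n jet"
    and om :: "nat \<Rightarrow> nat \<Rightarrow> 'n \<Rightarrow> complex^'n \<Rightarrow> complex"
  assumes open_V: "open V"
    and holo_frame: "\<And>a i L. a < N \<Longrightarrow> holo V (\<lambda>z. \<sigma> a z i L)"
    and trunc_lift_frame: "\<And>a y. a < N \<Longrightarrow> y \<in> V \<Longrightarrow> trunc (k0 - 2) (lift w d k0 y (\<sigma> a y)) = \<sigma> a y"
    and connection: "\<And>a i y. a < N \<Longrightarrow> y \<in> V \<Longrightarrow>
      nabla w d k0 i (\<sigma> a) y = lincomb {..<N} (\<lambda>b. om a b i y) (\<lambda>b. \<sigma> b y)"
    and S_le_N: "S \<le> N"
    and frame_tail_vanishes: "\<And>b y i L. S \<le> b \<Longrightarrow> b < N \<Longrightarrow> y \<in> V \<Longrightarrow> mabs L < k0 - 2 \<Longrightarrow>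
      \<sigma> b y i L = 0"
    and frame_head_independent: "\<And>y e. y \<in> V \<Longrightarrow>
      (\<And>i L. i < d \<Longrightarrow> mabs L < k0 - 2 \<Longrightarrow> (\<Sum>b<S. e b * \<sigma> b y i L) = 0) \<Longrightarrow> \<forall>b<S. e b = 0"
begin

lemma pd_frame_lift:
  assumes "a < N" "y \<in> V" "i < d" "mabs L \<le> k0 - 2"
  shows "pd k (\<lambda>z. \<sigma> a z i L) y
    = lift w d k0 y (\<sigma> a y) i (madd1 L k) + (\<Sum>b<N. om a b k y * \<sigma> b y i L)"
  using arg_cong[OF connection[OF assms(1,2), of k], of "\<lambda>s. s i L"] assms(3,4)
  by (simp add: nabla_def lincomb_def diff_eq_eq add.commute)

lemma pd_frame:
  assumes "a < N" "y \<in> V" "i < d" "mabs L < k0 - 2"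
  shows "pd k (\<lambda>z. \<sigma> a z i L) y = \<sigma> a y i (madd1 L k) + (\<Sum>b<N. om a b k y * \<sigma> b y i L)"
proof -
  have "lift w d k0 y (\<sigma> a y) i (madd1 L k) = trunc (k0 - 2) (lift w d k0 y (\<sigma> a y)) i (madd1 L k)"
    using assms(4) by (simp add: trunc_def mabs_madd1)
  then show ?thesis
    using pd_frame_lift[OF assms(1-3), of L k] assms(4) trunc_lift_frame[OF assms(1,2)] by simp
qed

lemma pd_frame_head:
  assumes "a < N" "y \<in> V" "i < d" "mabs L < k0 - 2"
  shows "pd k (\<lambda>z. \<sigma> a z i L) y = \<sigma> a y i (madd1 L k) + (\<Sum>b<S. om a b k y * \<sigma> b y i L)"
proof -
  have "(\<Sum>b<S. om a b k y * \<sigma> b y i L) = (\<Sum>b<N. om a b k y * \<sigma> b y i L)"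
    using S_le_N frame_tail_vanishes[OF _ _ assms(2,4)] by (intro sum.mono_neutral_left) auto
  then show ?thesis
    using pd_frame[OF assms] by simp
qed

text \<open>The head connection forms are differentiable: near each point they solve a linear system with
  holomorphic coefficients whose columns, the low-order jets of the head, are independent.\<close>
lemma connection_form_pd_differentiable:
  assumes a: "a < N" and b: "b < S" and y: "y \<in> V"
  shows "pd_differentiable l (om a b k) y"
proof -
  define P where "P = {p :: nat \<times> ('n \<Rightarrow> nat). fst p < d \<and> mabs (snd p) < k0 - 2}"
  define A where "A p b t = \<sigma> b (y + t *s axis l 1) (fst p) (snd p)" for p b t
  define v where "v p t = pd k (\<lambda>z. \<sigma> a z (fst p) (snd p)) (y + t *s axis l 1)
      - \<sigma> a (y + t *s axis l 1) (fst p) (madd1 (snd p) k)" for p t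
  have "finite P"
    by (rule finite_subset[of _ "{..<d} \<times> {L. mabs L \<le> k0}"]) (auto simp: P_def finite_mabs_le)
  then have "(\<lambda>t. om a b k (y + t *s axis l 1)) field_differentiable (at 0)"
  proof (rule field_differentiable_linear_solution[where A=A and v=v and c="\<lambda>b t. om a b k (y + t *s axis l 1)"])
    show "A p b' field_differentiable (at 0)" if "b' < S" for p b'
      using holo_pd_differentiable[OF holo_frame y] that S_le_N
      unfolding pd_differentiable_def A_def by simp
    show "v p field_differentiable (at 0)" for p
      using pd_differentiable_diff[OF holo_pd_pd(1)[OF holo_frame[OF a] open_V y]
          holo_pd_differentiable[OF holo_frame[OF a] y]]
      unfolding pd_differentiable_def v_def .
    show "\<forall>\<^sub>F t in nhds 0. \<forall>p\<in>P. (\<Sum>b<S. om a b k (y + t *s axis l 1) * A p b t) = v p t"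
      using eventually_line_in_open[OF open_V y, of "axis l 1"]
      by eventually_elim (auto simp: P_def A_def v_def pd_frame_head[OF a])
    show "\<forall>b<S. x b = 0" if "\<forall>p\<in>P. (\<Sum>b<S. x b * A p b 0) = 0" for x
      using that by (intro frame_head_independent[OF y]) (auto simp: P_def A_def)
  qed (rule b)
  then show ?thesis
    unfolding pd_differentiable_def .
qed

lemma pd_pd_frame_head:
  assumes a: "a < N" and y: "y \<in> V" and i: "i < d" and L: "mabs L < k0 - 2"
  shows "pd m (pd k (\<lambda>z. \<sigma> a z i L)) y =
      lift w d k0 y (\<sigma> a y) i (madd1 (madd1 L k) m) + (\<Sum>b<N. om a b m y * \<sigma> b y i (madd1 L k))
    + (\<Sum>b<S. pd m (om a b k) y * \<sigma> b y i L + om a b k y * pd m (\<lambda>z. \<sigma> b z i L) y)"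
proof -
  have diff_frame: "pd_differentiable m (\<lambda>z. \<sigma> b z i' L') y" if "b < N" for b i' L'
    by (rule holo_pd_differentiable[OF holo_frame[OF that] y])
  have diff_term: "pd_differentiable m (\<lambda>z. om a b k z * \<sigma> b z i L) y" if "b < S" for b
    using that S_le_N
    by (intro pd_differentiable_mult connection_form_pd_differentiable[OF a _ y] diff_frame) auto
  have "pd m (pd k (\<lambda>z. \<sigma> a z i L)) y
      = pd m (\<lambda>z. \<sigma> a z i (madd1 L k) + (\<Sum>b<S. om a b k z * \<sigma> b z i L)) y"
    by (rule pd_cong[OF open_V y]) (simp add: pd_frame_head[OF a _ i L])
  also have "\<dots> = pd m (\<lambda>z. \<sigma> a z i (madd1 L k)) y + pd m (\<lambda>z. \<Sum>b<S. om a b k z * \<sigma> b z i L) y"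
    by (rule pd_add[OF diff_frame[OF a] pd_differentiable_sum]) (simp add: diff_term)
  also have "pd m (\<lambda>z. \<Sum>b<S. om a b k z * \<sigma> b z i L) y = (\<Sum>b<S. pd m (\<lambda>z. om a b k z * \<sigma> b z i L) y)"
    by (rule pd_sum) (simp add: diff_term)
  also have "pd m (\<lambda>z. \<sigma> a z i (madd1 L k)) y
      = lift w d k0 y (\<sigma> a y) i (madd1 (madd1 L k) m) + (\<Sum>b<N. om a b m y * \<sigma> b y i (madd1 L k))"
    using L by (intro pd_frame_lift[OF a y i]) (simp add: mabs_madd1)
  also have "(\<Sum>b<S. pd m (\<lambda>z. om a b k z * \<sigma> b z i L) y)
      = (\<Sum>b<S. pd m (om a b k) y * \<sigma> b y i L + om a b k y * pd m (\<lambda>z. \<sigma> b z i L) y)"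
    using S_le_N
    by (intro sum.cong refl pd_mult connection_form_pd_differentiable[OF a _ y] diff_frame) auto
  finally show ?thesis .
qed

lemma pd_pd_frame:
  assumes a: "a < N" and y: "y \<in> V" and i: "i < d" and L: "mabs L < k0 - 2"
  shows "pd m (pd k (\<lambda>z. \<sigma> a z i L)) y =
      lift w d k0 y (\<sigma> a y) i (madd1 (madd1 L k) m)
    + (\<Sum>b<N. om a b m y * \<sigma> b y i (madd1 L k) + om a b k y * \<sigma> b y i (madd1 L m))
    + (\<Sum>b<N. (pd m (om a b k) y + (\<Sum>c<N. om c b m y * om a c k y)) * \<sigma> b y i L)"
proof -
  define X where "X b = pd m (om a b k) y * \<sigma> b y i L + om a b k y * pd m (\<lambda>z. \<sigma> b z i L) y" for b
  have "X b = 0" if "S \<le> b" "b < N" for b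
  proof -
    have "pd m (\<lambda>z. \<sigma> b z i L) y = 0"
      using frame_tail_vanishes[OF that _ L] by (intro pd_eq_0[OF open_V y])
    then show ?thesis
      by (simp add: X_def frame_tail_vanishes[OF that y L])
  qed
  then have "(\<Sum>b<S. X b) = (\<Sum>b<N. X b)"
    using S_le_N by (intro sum.mono_neutral_left) auto
  also have "\<dots> = (\<Sum>b<N. om a b k y * \<sigma> b y i (madd1 L m))
      + (\<Sum>b<N. pd m (om a b k) y * \<sigma> b y i L)
      + (\<Sum>b<N. \<Sum>c<N. om a b k y * om b c m y * \<sigma> c y i L)"
    unfolding sum.distrib[symmetric]
    by (intro sum.cong refl) (simp add: X_def pd_frame[OF _ y i L] distrib_left sum_distrib_left mult.assoc)
  also have "(\<Sum>b<N. \<Sum>c<N. om a b k y * om b c m y * \<sigma> c y i L)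
      = (\<Sum>b<N. (\<Sum>c<N. om c b m y * om a c k y) * \<sigma> b y i L)"
    by (subst sum.swap) (simp add: sum_distrib_left sum_distrib_right mult_ac)
  finally have "(\<Sum>b<S. X b) = (\<Sum>b<N. om a b k y * \<sigma> b y i (madd1 L m))
      + (\<Sum>b<N. (pd m (om a b k) y + (\<Sum>c<N. om c b m y * om a c k y)) * \<sigma> b y i L)"
    by (simp only: add.assoc distrib_right sum.distrib)
  then show ?thesis
    using pd_pd_frame_head[OF a y i L, of m k] by (simp only: X_def sum.distrib add.assoc)
qed

lemma curvature_frame_combination:
  assumes a: "a < N" and y: "y \<in> V" and i': "i' < d" and L: "mabs L < k0 - 2"
  shows "(\<Sum>b<N. curv N om a b i j y * \<sigma> b y i' L) = 0"
proof -
  have "pd i (pd j (\<lambda>z. \<sigma> a z i' L)) y = pd j (pd i (\<lambda>z. \<sigma> a z i' L)) y"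
    by (rule holo_pd_pd(2)[OF holo_frame[OF a] open_V y])
  then have "(\<Sum>b<N. (pd i (om a b j) y + (\<Sum>c<N. om c b i y * om a c j y)) * \<sigma> b y i' L)
      = (\<Sum>b<N. (pd j (om a b i) y + (\<Sum>c<N. om c b j y * om a c i y)) * \<sigma> b y i' L)"
    unfolding pd_pd_frame[OF a y i' L] by (simp add: madd1_commute add.commute)
  then show ?thesis
    by (simp add: curv_def algebra_simps sum_subtractf sum.distrib)
qed

lemma curvature_head_rows_vanish:
  assumes "a < N" "b < S" "y \<in> V"
  shows "curv N om a b i j y = 0"
proof -
  have "(\<Sum>b<S. curv N om a b i j y * \<sigma> b y i' L) = 0" if "i' < d" "mabs L < k0 - 2" for i' L
  proof -
    have "(\<Sum>b<S. curv N om a b i j y * \<sigma> b y i' L) = (\<Sum>b<N. curv N om a b i j y * \<sigma> b y i' L)"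
      using S_le_N frame_tail_vanishes[OF _ _ assms(3) that(2)] by (intro sum.mono_neutral_left) auto
    then show ?thesis
      using curvature_frame_combination[OF assms(1,3) that] by simp
  qed
  then have "\<forall>b<S. curv N om a b i j y = 0"
    by (rule frame_head_independent[OF assms(3)])
  then show ?thesis
    using assms(2) by simp
qed

end

section \<open>Adapted frames\<close>

lemma lincomb_unit:
  assumes "finite A" "b \<in> A"
  shows "lincomb A (\<lambda>a. if a = b then 1 else 0) v = v b"
  using assms by (simp add: lincomb_def fun_eq_iff if_distrib[where f="\<lambda>x. x * _"] cong: if_cong)

lemma is_basis_mem:
  assumes "is_basis E N v" "a < N"
  shows "v a \<in> E"
proof -
  have "v a = lincomb {..<N} (\<lambda>b. if b = a then 1 else 0) v"
    using lincomb_unit[of "{..<N}" a v] assms(2) by simp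
  then show ?thesis
    using assms(1) unfolding is_basis_def by blast
qed

lemma trunc_lift:
  assumes bij: "bij_betw (trunc (k0 - 2)) (Rk w d (k0 - 1) y) (Rk w d (k0 - 2) y)"
    and s: "s \<in> Rk w d (k0 - 2) y"
  shows "trunc (k0 - 2) (lift w d k0 y s) = s"
proof -
  have "s \<in> trunc (k0 - 2) ` Rk w d (k0 - 1) y"
    using bij s unfolding bij_betw_def by simp
  then obtain t where t: "t \<in> Rk w d (k0 - 1) y" "trunc (k0 - 2) t = s"
    by blast
  have "\<exists>!t. t \<in> Rk w d (k0 - 1) y \<and> trunc (k0 - 2) t = s"
    using t bij unfolding bij_betw_def inj_on_def by blast
  from theI'[OF this] show ?thesis
    unfolding lift_def by blast
qed

lemma Rk_vanishes: "s \<in> Rk w d k x \<Longrightarrow> d \<le> i \<or> k < mabs L \<Longrightarrow> s i L = 0"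
  unfolding Rk_def by blast

lemma zero_mem_Rk: "(\<lambda>i L. 0) \<in> Rk w d k x"
  by (simp add: Rk_def zeroeq_def firsteq_def)

lemma Ffilt_top: "Ffilt w d k0 (k0 - 1) y = {\<lambda>i L. 0}"
proof -
  have "Ffilt w d k0 (k0 - 1) y = {s \<in> Rk w d (k0 - 2) y. trunc (k0 - 2) s = (\<lambda>i L. 0)}"
  proof -
    have "k0 - 1 - 1 = k0 - 2"
      by simp
    then show ?thesis
      unfolding Ffilt_def by (simp only:)
  qed
  also have "\<dots> = {\<lambda>i L. 0}"
  proof (intro equalityI subsetI)
    fix s
    assume "s \<in> {s \<in> Rk w d (k0 - 2) y. trunc (k0 - 2) s = (\<lambda>i L. 0)}"
    then have R: "s \<in> Rk w d (k0 - 2) y" and T: "trunc (k0 - 2) s = (\<lambda>i L. 0)"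
      by simp_all
    have "s i L = 0" for i L
    proof (cases "mabs L \<le> k0 - 2")
      case True
      then show ?thesis
        using fun_cong[OF fun_cong[OF T], of i L] by (simp add: trunc_def)
    next
      case False
      then show ?thesis
        using R by (simp add: Rk_vanishes)
    qed
    then show "s \<in> {\<lambda>i L. 0}"
      by (simp add: fun_eq_iff)
  next
    fix s :: "'a jet"
    assume "s \<in> {\<lambda>i L. 0}"
    then show "s \<in> {s \<in> Rk w d (k0 - 2) y. trunc (k0 - 2) s = (\<lambda>i L. 0)}"
      by (simp add: zero_mem_Rk trunc_def)
  qed
  finally show ?thesis .
qed

lemma is_compl_zero_mem:
  assumes "is_compl F {\<lambda>i L. 0} A v" "finite A" "b \<in> A"
  shows "v b \<in> F"
proof -
  have "v b = (\<lambda>i L. lincomb A (\<lambda>a. if a = b then 1 else 0) v i L + 0)"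
    by (simp add: lincomb_unit[OF assms(2,3)])
  then show ?thesis
    using assms(1) unfolding is_compl_def by blast
qed

lemma is_compl_zero_coeff:
  assumes basis: "is_basis E N v" and compl: "is_compl F {\<lambda>i L. 0} A v" and "A \<subseteq> {..<N}"
    and "lincomb {..<N} e v \<in> F" and "b < N" "b \<notin> A"
  shows "e b = 0"
proof -
  obtain c t where "t \<in> {\<lambda>i L. 0}" and ct: "lincomb {..<N} e v = (\<lambda>i L. lincomb A c v i L + t i L)"
    using compl assms(4) unfolding is_compl_def by blast
  then have c: "lincomb {..<N} e v = lincomb A c v"
    by simp
  define c' where "c' a = (if a \<in> A then c a else 0)" for a
  have "lincomb A c v = lincomb {..<N} c' v"
    unfolding lincomb_def c'_def fun_eq_iff using assms(3)
    by (auto intro!: sum.mono_neutral_cong_left)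
  then have "lincomb {..<N} (\<lambda>a. e a - c' a) v = (\<lambda>i L. 0)"
    using c by (simp add: lincomb_def fun_eq_iff left_diff_distrib sum_subtractf)
  then have "\<forall>a<N. e a - c' a = 0"
    using basis unfolding is_basis_def by blast
  then have "e b - c' b = 0"
    using \<open>b < N\<close> by simp
  then show ?thesis
    using \<open>b \<notin> A\<close> by (simp add: c'_def)
qed

lemma Ffilt_vanishes:
  assumes "s \<in> Ffilt w d k0 h y" "mabs L < h"
  shows "s i L = 0"
proof -
  have "trunc (h - 1) s i L = 0"
    using assms(1) unfolding Ffilt_def by simp
  then show ?thesis
    using assms(2) by (simp add: trunc_def split: if_splits)
qed

lemma Ffilt_memI:
  assumes "s \<in> Rk w d (k0 - 2) y" "1 \<le> h" "\<And>i L. i < d \<Longrightarrow> mabs L < h \<Longrightarrow> s i L = 0"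
  shows "s \<in> Ffilt w d k0 h y"
proof -
  have "trunc (h - 1) s i L = 0" for i L
    using assms Rk_vanishes[OF assms(1), of i L] by (cases "i < d") (auto simp: trunc_def)
  then show ?thesis
    using assms(1) unfolding Ffilt_def by (simp add: fun_eq_iff)
qed

lemma adapted_top_block:
  assumes "3 \<le> k0" and "N = (\<Sum>h=1..k0-1. d - cnh CARD('n) h)"
    and adapted: "\<forall>h. 1 \<le> h \<and> h \<le> k0 - 2 \<longrightarrow> (\<forall>y\<in>V.
      is_compl (Ffilt w d k0 h y) (Ffilt w d k0 (h + 1) y)
        {a. (\<Sum>k=1..h. d - cnh CARD('n::finite) k) \<le> a \<and> a < (\<Sum>k=1..h+1. d - cnh CARD('n) k)}
        (\<lambda>a. \<sigma> a y))"
    and "y \<in> V"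
  shows "is_compl (Ffilt w d k0 (k0 - 2) y) {\<lambda>i L. 0}
      {a. (\<Sum>k=1..k0-2. d - cnh CARD('n) k) \<le> a \<and> a < N} (\<lambda>a. \<sigma> a y)"
proof -
  have top: "k0 - 2 + 1 = k0 - 1"
    using assms(1) by simp
  have "1 \<le> k0 - 2 \<and> k0 - 2 \<le> k0 - 2"
    using assms(1) by simp
  then have "is_compl (Ffilt w d k0 (k0 - 2) y) (Ffilt w d k0 (k0 - 2 + 1) y)
      {a. (\<Sum>k=1..k0-2. d - cnh CARD('n) k) \<le> a \<and> a < (\<Sum>k=1..k0-2+1. d - cnh CARD('n) k)}
      (\<lambda>a. \<sigma> a y)"
    using adapted \<open>y \<in> V\<close> by blast
  then show ?thesis
    by (simp only: top Ffilt_top assms(2)[symmetric])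
qed

lemma head_independent_modulo_top:
  fixes \<sigma> :: "nat \<Rightarrow> 'n::finite jet"
  assumes basis: "is_basis (Rk w d (k0 - 2) y) N \<sigma>"
    and top: "is_compl (Ffilt w d k0 (k0 - 2) y) {\<lambda>i L. 0} {a. S \<le> a \<and> a < N} \<sigma>"
    and "S \<le> N" "3 \<le> k0"
    and head: "\<And>i L. i < d \<Longrightarrow> mabs L < k0 - 2 \<Longrightarrow> (\<Sum>b<S. e b * \<sigma> b i L) = 0"
  shows "\<forall>b<S. e b = 0"
proof -
  define e' where "e' b = (if b < S then e b else 0)" for b
  have in_top: "lincomb {..<N} e' \<sigma> \<in> Ffilt w d k0 (k0 - 2) y"
  proof (rule Ffilt_memI)
    show "lincomb {..<N} e' \<sigma> \<in> Rk w d (k0 - 2) y"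
      using basis unfolding is_basis_def by blast
    show "lincomb {..<N} e' \<sigma> i L = 0" if "i < d" "mabs L < k0 - 2" for i L
    proof -
      have "lincomb {..<N} e' \<sigma> i L = (\<Sum>b<S. e b * \<sigma> b i L)"
        unfolding lincomb_def e'_def using \<open>S \<le> N\<close>
        by (intro sum.mono_neutral_cong_right) auto
      then show ?thesis
        using head[OF that] by simp
    qed
  qed (use \<open>3 \<le> k0\<close> in simp)
  have "e' b = 0" if "b < S" for b
    using that \<open>S \<le> N\<close> by (intro is_compl_zero_coeff[OF basis top _ in_top]) auto
  then show ?thesis
    by (simp add: e'_def)
qed

lemma adapted_tautological_frame:
  fixes V :: "(complex^'n::finite) set" and \<sigma> :: "nat \<Rightarrow> complex^'n \<Rightarrow> 'n jet"
    and d k0 N :: nat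
  defines "S \<equiv> \<Sum>k=1..k0-2. d - cnh CARD('n) k"
  assumes k0: "k0 \<ge> 2"
    and N_def: "N = (\<Sum>h=1..k0-1. d - cnh CARD('n) h)"
    and lift_iso: "\<forall>y\<in>V. bij_betw (trunc (k0 - 2)) (Rk w d (k0 - 1) y) (Rk w d (k0 - 2) y)"
    and V_open: "open V"
    and triv_holo: "\<forall>a<N. holo_sec V (\<sigma> a)"
    and triv_basis: "\<forall>y\<in>V. is_basis (Rk w d (k0 - 2) y) N (\<lambda>a. \<sigma> a y)"
    and adapted: "\<forall>h. 1 \<le> h \<and> h \<le> k0 - 2 \<longrightarrow> (\<forall>y\<in>V.
        is_compl (Ffilt w d k0 h y) (Ffilt w d k0 (h + 1) y)
          {a. (\<Sum>k=1..h. d - cnh CARD('n) k) \<le> a \<and> a < (\<Sum>k=1..h+1. d - cnh CARD('n) k)}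
          (\<lambda>a. \<sigma> a y))"
    and conn_forms: "\<forall>a<N. \<forall>i. \<forall>y\<in>V.
        nabla w d k0 i (\<sigma> a) y = lincomb {..<N} (\<lambda>b. om a b i y) (\<lambda>b. \<sigma> b y)"
  shows "tautological_frame V w d k0 N S \<sigma> om"
proof
  have "k0 - 1 = Suc (k0 - 2)"
    using k0 by simp
  then show "S \<le> N"
    unfolding N_def S_def by simp
  show "open V"
    by (rule V_open)
  show "holo V (\<lambda>z. \<sigma> a z i L)" if "a < N" for a i L
    using triv_holo that unfolding holo_sec_def by blast
  show "trunc (k0 - 2) (lift w d k0 y (\<sigma> a y)) = \<sigma> a y" if "a < N" "y \<in> V" for a y
    using is_basis_mem[OF triv_basis[rule_format, OF that(2)] that(1)]
    by (intro trunc_lift lift_iso[rule_format, OF that(2)]) simp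
  show "nabla w d k0 i (\<sigma> a) y = lincomb {..<N} (\<lambda>b. om a b i y) (\<lambda>b. \<sigma> b y)"
    if "a < N" "y \<in> V" for a i y
    using conn_forms that by blast
  show "\<sigma> b y i L = 0" if b: "S \<le> b" "b < N" and y: "y \<in> V" and L: "mabs L < k0 - 2" for b y i L
  proof -
    have "3 \<le> k0"
      using L by linarith
    from is_compl_zero_mem[OF adapted_top_block[OF this N_def adapted y]] b
    have "\<sigma> b y \<in> Ffilt w d k0 (k0 - 2) y"
      by (simp add: S_def)
    then show ?thesis
      using L by (rule Ffilt_vanishes)
  qed
  show "\<forall>b<S. e b = 0"
    if y: "y \<in> V" and "\<And>i L. i < d \<Longrightarrow> mabs L < k0 - 2 \<Longrightarrow> (\<Sum>b<S. e b * \<sigma> b y i L) = 0"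
    for y e
  proof (cases "3 \<le> k0")
    case True
    show ?thesis
      using adapted_top_block[OF True N_def adapted y] triv_basis y \<open>S \<le> N\<close> True that(2)
      unfolding S_def[symmetric] by (intro head_independent_modulo_top) auto
  qed (simp add: S_def)
qed

theorem theorem4:
  fixes X V :: "(complex^'n::finite) set"
    and w :: "nat \<Rightarrow> 'n \<Rightarrow> complex^'n \<Rightarrow> complex"
    and d k0 N :: nat
    and \<sigma> :: "nat \<Rightarrow> complex^'n \<Rightarrow> 'n jet"
    and om :: "nat \<Rightarrow> nat \<Rightarrow> 'n \<Rightarrow> complex^'n \<Rightarrow> complex"
  assumes n2: "CARD('n) \<ge> 2"
    and X_open: "open X"
    and w_holo: "\<forall>i<d. \<forall>j. holo X (w i j)"
    and w_nonvan: "\<forall>i<d. \<forall>x\<in>X. \<exists>j. w i j x \<noteq> 0"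
    and w_integrable: "\<forall>i<d. \<forall>x\<in>X. integrable_form (w i) x"
    and k0: "k0 \<ge> 2"
    and calibrated: "d = cnh CARD('n) k0"
    and ord_rank: "\<forall>k. k \<le> k0 - 2 \<longrightarrow>
                     is_hvb X (Rk w d k) (\<Sum>h=1..k+1. d - cnh CARD('n) h)"
    and N_def: "N = (\<Sum>h=1..k0-1. d - cnh CARD('n) h)"
    and ord_iso_hvb: "is_hvb X (Rk w d (k0 - 1)) N"
    and ord_iso: "\<forall>x\<in>X. bij_betw (trunc (k0 - 2)) (Rk w d (k0 - 1) x) (Rk w d (k0 - 2) x)"
    and V_open: "open V" and V_sub: "V \<subseteq> X"
    and triv_holo: "\<forall>a<N. holo_sec V (\<sigma> a)"
    and triv_basis: "\<forall>y\<in>V. is_basis (Rk w d (k0 - 2) y) N (\<lambda>a. \<sigma> a y)"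
    and adapted: "\<forall>h. 1 \<le> h \<and> h \<le> k0 - 2 \<longrightarrow> (\<forall>y\<in>V.
        is_compl (Ffilt w d k0 h y) (Ffilt w d k0 (h + 1) y)
          {a. (\<Sum>k=1..h. d - cnh CARD('n) k) \<le> a \<and> a < (\<Sum>k=1..h+1. d - cnh CARD('n) k)}
          (\<lambda>a. \<sigma> a y))"
    and conn_forms: "\<forall>a<N. \<forall>i. \<forall>y\<in>V.
        nabla w d k0 i (\<sigma> a) y = lincomb {..<N} (\<lambda>b. om a b i y) (\<lambda>b. \<sigma> b y)"
  shows "\<forall>a<N. \<forall>b. b < N - cnh (CARD('n) - 1) k0 \<longrightarrow>
           (\<forall>i j. \<forall>y\<in>V. curv N om a b i j y = 0)"
proof -
  define S where "S = (\<Sum>k=1..k0-2. d - cnh CARD('n) k)"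
  have "k0 - 1 = Suc (k0 - 2)"
    using k0 by simp
  then have "N = S + (d - cnh CARD('n) (k0 - 1))"
    unfolding N_def S_def by simp
  also have "d - cnh CARD('n) (k0 - 1) = cnh (CARD('n) - 1) k0"
    using cnh_pascal[OF n2, of k0] k0 calibrated by simp
  finally have N_minus: "N - cnh (CARD('n) - 1) k0 = S"
    by simp
  interpret tautological_frame V w d k0 N S \<sigma> om
    unfolding S_def using ord_iso V_sub
    by (intro adapted_tautological_frame k0 N_def V_open triv_holo triv_basis adapted conn_forms) auto
  show ?thesis
    using curvature_head_rows_vanish N_minus by auto
qed

end
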